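(* Let $a<b$ be real numbers and let $h,g:[a,b)\to\mathbb{R}$ be continuous functions such that $h$ is increasing and is not constant on any neighborhood of $a$. For $x\in(a,b)$ let $\mu(x)$ be the supremum of the set of numbers $\tau\in(a,x]$ that are points of local extremum of the function $$t\mapsto \bigl(g(x)-g(a)\bigr)h(t)-\bigl(h(x)-h(a)\bigr)g(t),\qquad t\in[a,b).$$ Suppose that the limit $\lim_{x\to a}\frac{g(x)-g(a)}{h(x)-h(a)}$ exists and is finite. Then $$\varlimsup_{x\to a}\frac{h(\mu(x))-h(a)}{h(x)-h(a)}\ \geq\ \frac1e.$$
   Context: Limits at $a$ are right-hand limits. *)

theory Defs
  imports Complex_Main "HOL-Library.Extended_Real" "HOL-Library.Liminf_Limsup"
begin

definition local_extremum_on :: "real set \<Rightarrow> (real \<Rightarrow> real) \<Rightarrow> real \<Rightarrow> bool" where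
  "local_extremum_on S f \<tau> \<longleftrightarrow> \<tau> \<in> S \<and>
     (\<exists>\<delta>>0. (\<forall>t\<in>S. \<bar>t - \<tau>\<bar> < \<delta> \<longrightarrow> f t \<le> f \<tau>) \<or>
             (\<forall>t\<in>S. \<bar>t - \<tau>\<bar> < \<delta> \<longrightarrow> f \<tau> \<le> f t))"

definition mu :: "real \<Rightarrow> real \<Rightarrow> (real \<Rightarrow> real) \<Rightarrow> (real \<Rightarrow> real) \<Rightarrow> real \<Rightarrow> real" where
  "mu a b h g x = Sup {\<tau> \<in> {a<..x}.
      local_extremum_on {a..<b} (\<lambda>t. (g x - g a) * h t - (h x - h a) * g t) \<tau>}"

end

theory Submission
  imports Defs "HOL-Analysis.Analysis"
begin

(*
  Write H = h - h a and r = (g - g a) / H.  For x > a the function E_x of the statement satisfies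
  E_x t - E_x a = H x * H t * (r x - r t).  Since E_x a = E_x x, E_x has a local extremum in (a, x),
  and by the choice of mu it has none in (mu x, x); so t |-> H t * (r x - r t) is injective on the
  window [mu x, x], and r - r x has constant sign on [mu x, x).

  If the limsup were below 1/e, then H (mu x) < q * H x near a for some q < 1/e.  The one-sided
  windows then force r to be injective, hence strictly monotone, and replacing r by r - L or L - r
  it may be taken increasing with limit 0.  Then t |-> H t * (r x - r t) decreases on each window.
  At points y k with H (y k) = theta^k * H T this gives, for u k = r (y k), the lagged decay
  u (n+m-1) - u (n+m) >= (1 - theta) * (u n - u (n+m)) as soon as theta^m > q, and telescoping
  forces m * (1 - theta) <= 1.  As (1 - beta/m)^m tends to exp (-beta), q < 1/e leaves room for
  theta^m > q together with m * (1 - theta) > 1.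
*)

lemma interior_extremum_if_equal_ends:
  fixes f :: "real \<Rightarrow> real"
  assumes "s < t" "continuous_on {s..t} f" "f s = f t"
  obtains c where "s < c" "c < t" "(\<forall>y\<in>{s..t}. f y \<le> f c) \<or> (\<forall>y\<in>{s..t}. f c \<le> f y)"
proof -
  obtain c1 where c1: "c1 \<in> {s..t}" "\<forall>y\<in>{s..t}. f y \<le> f c1"
    using continuous_attains_sup[OF compact_Icc _ assms(2)] assms(1) by auto
  obtain c2 where c2: "c2 \<in> {s..t}" "\<forall>y\<in>{s..t}. f c2 \<le> f y"
    using continuous_attains_inf[OF compact_Icc _ assms(2)] assms(1) by auto
  have "s < c1 \<and> c1 < t \<or> f c1 = f s" "s < c2 \<and> c2 < t \<or> f c2 = f s"
    using c1(1) c2(1) assms(3) by (auto simp: order.order_iff_strict)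
  then consider "s < c1 \<and> c1 < t" | "s < c2 \<and> c2 < t" | "f c1 = f s" "f c2 = f s"
    by blast
  then show thesis
  proof cases
    case 3
    define c where "c = (s + t) / 2"
    have "c \<in> {s..t}" using assms(1) by (simp add: c_def)
    then have "\<forall>y\<in>{s..t}. f y \<le> f c"
      using c1(2) c2(2) 3 by (metis order.trans)
    then show thesis using that[of c] assms(1) by (simp add: c_def)
  qed (use that c1 c2 in blast)+
qed

lemma inj_on_if_no_local_extremum:
  fixes f :: "real \<Rightarrow> real"
  assumes "{p..r} \<subseteq> S" "continuous_on {p..r} f"
    and no_extremum: "\<And>\<tau>. p < \<tau> \<Longrightarrow> \<tau> < r \<Longrightarrow> \<not> local_extremum_on S f \<tau>"
  shows "inj_on f {p..r}"
proof (rule linorder_inj_onI')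
  fix s t assume st: "s \<in> {p..r}" "t \<in> {p..r}" "s < t"
  show "f s \<noteq> f t"
  proof
    assume "f s = f t"
    moreover have "continuous_on {s..t} f"
      using assms(2) by (rule continuous_on_subset) (use st in auto)
    ultimately obtain c where c: "s < c" "c < t"
      and ext: "(\<forall>y\<in>{s..t}. f y \<le> f c) \<or> (\<forall>y\<in>{s..t}. f c \<le> f y)"
      using interior_extremum_if_equal_ends st(3) by blast
    have "local_extremum_on S f c"
      unfolding local_extremum_on_def
    proof (intro conjI exI[of _ "min (c - s) (t - c)"])
      have "y \<in> {s..t}" if "\<bar>y - c\<bar> < min (c - s) (t - c)" for y
        using that by auto
      then show "(\<forall>y\<in>S. \<bar>y - c\<bar> < min (c - s) (t - c) \<longrightarrow> f y \<le> f c) \<or>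
          (\<forall>y\<in>S. \<bar>y - c\<bar> < min (c - s) (t - c) \<longrightarrow> f c \<le> f y)"
        using ext by blast
    qed (use c st assms(1) in auto)
    then show False using no_extremum c st by auto
  qed
qed

lemma Sup_local_extrema_window:
  fixes f :: "real \<Rightarrow> real"
  assumes "a < x" "x < b" "continuous_on {a..<b} f" "f a = f x"
  defines "m \<equiv> Sup {\<tau> \<in> {a<..x}. local_extremum_on {a..<b} f \<tau>}"
  shows "a < m" "m \<le> x" "inj_on f {m..x}"
proof -
  define S where "S = {\<tau> \<in> {a<..x}. local_extremum_on {a..<b} f \<tau>}"
  have m: "m = Sup S" by (simp add: m_def S_def)
  have bdd: "bdd_above S" unfolding S_def by (rule bdd_aboveI[of _ x]) auto
  have cont: "continuous_on {p..x} f" if "a \<le> p" for p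
    using assms(3) by (rule continuous_on_subset) (use that assms(2) in auto)
  have sub: "{p..x} \<subseteq> {a..<b}" if "a \<le> p" for p
    using that assms(2) by auto
  have "\<not> inj_on f {a..x}"
    using assms(1,4) inj_onD[of f "{a..x}" a x] by auto
  then obtain \<tau> where "a < \<tau>" "\<tau> < x" "local_extremum_on {a..<b} f \<tau>"
    using inj_on_if_no_local_extremum[OF sub cont] by blast
  then have \<tau>: "\<tau> \<in> S" by (simp add: S_def)
  show "a < m" using cSup_upper[OF \<tau> bdd] \<open>a < \<tau>\<close> m by simp
  moreover show "m \<le> x" unfolding m
    by (rule cSup_least) (use \<tau> in \<open>auto simp: S_def\<close>)
  moreover have "\<not> local_extremum_on {a..<b} f t" if "m < t" "t < x" for t
  proof
    assume "local_extremum_on {a..<b} f t"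
    then have "t \<in> S" using that \<open>a < m\<close> by (simp add: S_def)
    then show False using cSup_upper[OF _ bdd, of t] that m by simp
  qed
  ultimately show "inj_on f {m..x}"
    using inj_on_if_no_local_extremum[OF sub cont] by simp
qed

lemma inj_vanishing_at_right_end_cases:
  fixes Q :: "real \<Rightarrow> real"
  assumes "continuous_on {m..x} Q" "inj_on Q {m..x}" "Q x = 0"
  shows "(\<forall>t\<in>{m..<x}. Q t < 0) \<and> strict_mono_on {m..x} Q \<or>
         (\<forall>t\<in>{m..<x}. 0 < Q t) \<and> strict_antimono_on {m..x} Q"
proof -
  have "strict_mono_on {m..x} Q \<or> strict_antimono_on {m..x} Q"
    using injective_eq_monotone_map[of "{m..x}" Q] assms(1,2) by (simp add: is_interval_cc)
  then show ?thesis
  proof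
    assume "strict_mono_on {m..x} Q"
    then have "Q t < 0" if "t \<in> {m..<x}" for t
      using monotone_onD[of "{m..x}" _ _ Q t x] that assms(3) by auto
    then show ?thesis using \<open>strict_mono_on {m..x} Q\<close> by blast
  next
    assume "strict_antimono_on {m..x} Q"
    then have "0 < Q t" if "t \<in> {m..<x}" for t
      using monotone_onD[of "{m..x}" _ _ Q t x] that assms(3) by auto
    then show ?thesis using \<open>strict_antimono_on {m..x} Q\<close> by blast
  qed
qed

lemma continuous_on_window_product:
  fixes H w :: "real \<Rightarrow> real"
  assumes "continuous_on S H" "continuous_on S w" "{m..x} \<subseteq> S"
  shows "continuous_on {m..x} (\<lambda>t. H t * (w x - w t))"
  using continuous_on_subset[OF assms(1,3)] continuous_on_subset[OF assms(2,3)]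
  by (intro continuous_intros)

lemma one_sided_if_inj_window:
  fixes H w :: "real \<Rightarrow> real"
  assumes "continuous_on {m..x} (\<lambda>t. H t * (w x - w t))" "inj_on (\<lambda>t. H t * (w x - w t)) {m..x}"
    and "\<And>t. m \<le> t \<Longrightarrow> t < x \<Longrightarrow> 0 < H t"
  shows "(\<forall>t\<in>{m..<x}. w t < w x) \<or> (\<forall>t\<in>{m..<x}. w x < w t)"
proof -
  have "(\<forall>t\<in>{m..<x}. H t * (w x - w t) < 0) \<or> (\<forall>t\<in>{m..<x}. 0 < H t * (w x - w t))"
    using inj_vanishing_at_right_end_cases[OF assms(1,2)] by auto
  moreover have "(H t * (w x - w t) < 0 \<longleftrightarrow> w x < w t) \<and> (0 < H t * (w x - w t) \<longleftrightarrow> w t < w x)"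
    if "t \<in> {m..<x}" for t
    using assms(3)[of t] that by (simp add: mult_less_0_iff zero_less_mult_iff)
  ultimately show ?thesis by blast
qed

lemma window_decay_if_inj:
  fixes H w :: "real \<Rightarrow> real"
  assumes "continuous_on {m..x} (\<lambda>t. H t * (w x - w t))" "inj_on (\<lambda>t. H t * (w x - w t)) {m..x}"
    and "\<And>t. m \<le> t \<Longrightarrow> t < x \<Longrightarrow> 0 < H t \<and> w t < w x"
    and "m \<le> s" "s \<le> t" "t \<le> x"
  shows "H t * (w x - w t) \<le> H s * (w x - w s)"
proof (cases "s = t")
  case False
  then have "0 < H s * (w x - w s)" using assms(3)[of s] assms(4-6) by simp
  moreover have "s \<in> {m..<x}" using assms(4-6) False by auto
  moreover have "(\<forall>t\<in>{m..<x}. H t * (w x - w t) < 0) \<or>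
      strict_antimono_on {m..x} (\<lambda>t. H t * (w x - w t))"
    using inj_vanishing_at_right_end_cases[OF assms(1,2)] by auto
  ultimately have "strict_antimono_on {m..x} (\<lambda>t. H t * (w x - w t))"
    by force
  then show ?thesis using monotone_onD[of "{m..x}" _ _ _ s t] assms(4-6) False by fastforce
qed simp

lemma window_left_ends_below:
  fixes H mu :: "real \<Rightarrow> real"
  assumes "q < 1" "continuous_on {a<..c0} H" "mono_on {a<..c0} H"
    and "a < s" "s < c" "c < c0" "0 < H c"
    and mu: "\<And>x. c < x \<Longrightarrow> x \<le> c0 \<Longrightarrow> a < mu x \<and> mu x \<le> c0 \<and> H (mu x) < q * H x"
  obtains c' \<delta> where "s < c'" "c' < c" "0 < \<delta>" "\<And>x. c < x \<Longrightarrow> x < c + \<delta> \<Longrightarrow> mu x < c'"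
proof -
  \<comment> \<open>for \<open>x\<close> just right of \<open>c\<close>: \<open>H (mu x) < q * H x < r < H c'\<close>, with \<open>c'\<close> just left of \<open>c\<close>\<close>
  define r where "r = (1 + q) / 2 * H c"
  have r: "q * H c < r" "r < H c"
    using assms(1,7) by (simp_all add: r_def algebra_simps)
  have "continuous_on {a<..<c0} H"
    using assms(2) by (rule continuous_on_subset) auto
  then have "isCont H c"
    using assms(4-6) by (simp add: continuous_on_eq_continuous_at)
  then have "(H \<longlongrightarrow> H c) (at c)" "((\<lambda>y. q * H y) \<longlongrightarrow> q * H c) (at c)"
    using tendsto_mult_left[of H "H c" "at c" q] by (simp_all add: isCont_def)
  then have "eventually (\<lambda>y. r < H y \<and> q * H y < r) (at c)"
    using order_tendstoD(1)[of H, OF _ r(2)] order_tendstoD(2)[OF _ r(1)] eventually_conj by blast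
  then obtain d where d: "0 < d" "\<And>y. y \<noteq> c \<Longrightarrow> dist y c < d \<Longrightarrow> r < H y \<and> q * H y < r"
    unfolding eventually_at by blast
  define c' where "c' = max ((s + c) / 2) (c - d / 2)"
  have c': "s < c'" "c' < c"
    using d(1) assms(5) by (auto simp: c'_def less_max_iff_disj)
  moreover have "c - c' < d"
    using d(1) max.cobounded2[of "c - d / 2" "(s + c) / 2"] unfolding c'_def by linarith
  then have "r < H c'"
    using d(2)[of c'] c'(2) by (simp add: dist_real_def)
  ultimately have c': "s < c'" "c' < c" "r < H c'" by auto
  show thesis
  proof (rule that[OF c'(1,2), of "min d (c0 - c)"])
    show "0 < min d (c0 - c)" using d assms(6) by simp
    fix x assume x: "c < x" "x < c + min d (c0 - c)"
    then have Hx: "H (mu x) < q * H x" "q * H x < r" "a < mu x" "mu x \<le> c0"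
      using mu[of x] d(2)[of x] by (auto simp: dist_real_def)
    have "H (mu x) < H c'" using Hx(1,2) c'(3) by linarith
    then show "mu x < c'"
      using mono_on_strict_invE[OF assms(3), of "mu x" c'] Hx(3,4) c' assms(4-6) by auto
  qed
qed

lemma one_sided_windows_no_interior_max:
  fixes w mu :: "real \<Rightarrow> real"
  assumes "isCont w c" "c' < c" "0 < \<delta>"
    and lag: "\<And>x. c < x \<Longrightarrow> x < c + \<delta> \<Longrightarrow> mu x < c'"
    and window: "\<And>x. c \<le> x \<Longrightarrow> x < c + \<delta> \<Longrightarrow>
      mu x < x \<and> ((\<forall>t\<in>{mu x..<x}. w t < w x) \<or> (\<forall>t\<in>{mu x..<x}. w x < w t))"
    and max: "\<And>y. c' \<le> y \<Longrightarrow> y < c + \<delta> \<Longrightarrow> w y \<le> w c"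
  shows False
proof -
  \<comment> \<open>the window of \<open>x\<close> contains \<open>c\<close>, where \<open>w\<close> is at least \<open>w x\<close>, so it lies above \<open>w x\<close>\<close>
  have right: "w x < w y" if x: "c < x" "x < c + \<delta>" and y: "c' \<le> y" "y \<le> c" for x y
  proof -
    have "mu x \<le> y" using lag[OF x] y by auto
    have "c \<in> {mu x..<x}" "\<not> w c < w x"
      using lag[OF x] max[of x] x assms(2) by auto
    then have "\<forall>t\<in>{mu x..<x}. w x < w t"
      using window[of x] x by auto
    then show ?thesis using \<open>mu x \<le> y\<close> x y by auto
  qed
  have flat: "w y = w c" if y: "c' \<le> y" "y \<le> c" for y
  proof (rule antisym)
    show "w y \<le> w c" using max y assms(3) by auto
    have "(w \<longlongrightarrow> w c) (at_right c)"
      using assms(1) by (simp add: isCont_def filterlim_at_split)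
    moreover have "eventually (\<lambda>x. w x \<le> w y) (at_right c)"
      unfolding eventually_at_right_field
      using right y assms(3) by (intro exI[of _ "c + \<delta>"]) (auto intro: less_imp_le)
    ultimately show "w c \<le> w y" by (rule tendsto_upperbound) simp
  qed
  \<comment> \<open>so \<open>w\<close> is constant on \<open>[c', c]\<close>, which meets the window of \<open>c\<close>\<close>
  define y0 where "y0 = max c' (mu c)"
  have "y0 \<in> {mu c..<c}" "w y0 = w c"
    using window[of c] flat[of y0] assms(2,3) by (auto simp: y0_def)
  moreover have "(\<forall>t\<in>{mu c..<c}. w t < w c) \<or> (\<forall>t\<in>{mu c..<c}. w c < w t)"
    using window[of c] assms(3) by simp
  ultimately show False by (metis less_irrefl)
qed

lemma one_sided_windows_no_interior_extremum:
  fixes H w mu :: "real \<Rightarrow> real"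
  assumes "q < 1" "continuous_on {a<..c0} H" "mono_on {a<..c0} H"
    and "\<And>t. a < t \<Longrightarrow> t \<le> c0 \<Longrightarrow> 0 < H t"
    and "continuous_on {a<..c0} w"
    and window: "\<And>x. a < x \<Longrightarrow> x \<le> c0 \<Longrightarrow> a < mu x \<and> mu x < x \<and> H (mu x) < q * H x \<and>
      ((\<forall>t\<in>{mu x..<x}. w t < w x) \<or> (\<forall>t\<in>{mu x..<x}. w x < w t))"
    and "a < s" "s < c" "c < t" "t \<le> c0"
    and extremum: "(\<forall>y\<in>{s..t}. w y \<le> w c) \<or> (\<forall>y\<in>{s..t}. w c \<le> w y)"
  shows False
proof -
  have "continuous_on {a<..<c0} w"
    using assms(5) by (rule continuous_on_subset) auto
  then have cont: "isCont w c" "isCont (\<lambda>y. - w y) c"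
    using assms(7-10) by (simp_all add: continuous_on_eq_continuous_at)
  have mu: "a < mu x \<and> mu x \<le> c0 \<and> H (mu x) < q * H x" if "c < x" "x \<le> c0" for x
    using window[of x] that assms(7,8) by auto
  have "c < c0" "0 < H c" using assms(4,7-10) by auto
  then obtain c' \<delta> where c': "s < c'" "c' < c" "0 < \<delta>"
    and lag: "\<And>x. c < x \<Longrightarrow> x < c + \<delta> \<Longrightarrow> mu x < c'"
    using window_left_ends_below[OF assms(1-3,7,8) _ _ mu] by blast
  define \<epsilon> where "\<epsilon> = min \<delta> (t - c)"
  have \<epsilon>: "0 < \<epsilon>" "\<And>x. c < x \<Longrightarrow> x < c + \<epsilon> \<Longrightarrow> mu x < c'"
    using c' lag assms(9) by (auto simp: \<epsilon>_def)
  have near: "y \<in> {s..t}" if "c' \<le> y" "y < c + \<epsilon>" for y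
    using that c' by (auto simp: \<epsilon>_def)
  have windows:
    "mu x < x \<and> ((\<forall>t\<in>{mu x..<x}. w t < w x) \<or> (\<forall>t\<in>{mu x..<x}. w x < w t))"
    "mu x < x \<and> ((\<forall>t\<in>{mu x..<x}. - w t < - w x) \<or> (\<forall>t\<in>{mu x..<x}. - w x < - w t))"
    if "c \<le> x" "x < c + \<epsilon>" for x
  proof -
    have "a < x" "x \<le> c0" using that assms(7-10) by (auto simp: \<epsilon>_def)
    then show "mu x < x \<and> ((\<forall>t\<in>{mu x..<x}. w t < w x) \<or> (\<forall>t\<in>{mu x..<x}. w x < w t))"
      using window[of x] by simp
    then show "mu x < x \<and> ((\<forall>t\<in>{mu x..<x}. - w t < - w x) \<or> (\<forall>t\<in>{mu x..<x}. - w x < - w t))"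
      by auto
  qed
  from extremum show False
  proof
    assume "\<forall>y\<in>{s..t}. w y \<le> w c"
    then have "w y \<le> w c" if "c' \<le> y" "y < c + \<epsilon>" for y
      using near that by blast
    from one_sided_windows_no_interior_max[OF cont(1) c'(2) \<epsilon> windows(1) this]
    show False .
  next
    assume "\<forall>y\<in>{s..t}. w c \<le> w y"
    then have "- w y \<le> - w c" if "c' \<le> y" "y < c + \<epsilon>" for y
      using near that by simp
    from one_sided_windows_no_interior_max[OF cont(2) c'(2) \<epsilon> windows(2) this]
    show False .
  qed
qed

lemma inj_windows_strict_mono_or_antimono:
  fixes H w mu :: "real \<Rightarrow> real"
  assumes "q < 1" "continuous_on {a<..c0} H" "mono_on {a<..c0} H"
    and pos: "\<And>t. a < t \<Longrightarrow> t \<le> c0 \<Longrightarrow> 0 < H t"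
    and "continuous_on {a<..c0} w"
    and window: "\<And>x. a < x \<Longrightarrow> x \<le> c0 \<Longrightarrow> a < mu x \<and> mu x \<le> x \<and> H (mu x) < q * H x \<and>
      inj_on (\<lambda>t. H t * (w x - w t)) {mu x..x}"
  shows "strict_mono_on {a<..c0} w \<or> strict_antimono_on {a<..c0} w"
proof -
  have one_sided: "a < mu x \<and> mu x < x \<and> H (mu x) < q * H x \<and>
      ((\<forall>t\<in>{mu x..<x}. w t < w x) \<or> (\<forall>t\<in>{mu x..<x}. w x < w t))" if "a < x" "x \<le> c0" for x
  proof -
    have "q * H x < H x" using assms(1) pos[OF that] by simp
    then have "mu x < x" using window[OF that] by (cases "mu x = x") auto
    moreover have "continuous_on {mu x..x} (\<lambda>t. H t * (w x - w t))"
      using window[OF that] that by (intro continuous_on_window_product[OF assms(2,5)]) auto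
    ultimately show ?thesis
      using one_sided_if_inj_window window[OF that] pos that by simp
  qed
  have "w s \<noteq> w t" if st: "a < s" "s < t" "t \<le> c0" for s t
  proof
    assume "w s = w t"
    moreover have "continuous_on {s..t} w"
      using assms(5) by (rule continuous_on_subset) (use st in auto)
    ultimately obtain c where "s < c" "c < t"
      "(\<forall>y\<in>{s..t}. w y \<le> w c) \<or> (\<forall>y\<in>{s..t}. w c \<le> w y)"
      using interior_extremum_if_equal_ends st(2) by blast
    then show False
      using one_sided_windows_no_interior_extremum[OF assms(1-5) one_sided st(1)] st(3) by blast
  qed
  then have "inj_on w {a<..c0}"
    by (intro linorder_inj_onI') auto
  then show ?thesis
    using injective_eq_monotone_map[of "{a<..c0}" w] assms(5) by (simp add: is_interval_oc)
qed

lemma lagged_decay_rate_le_one: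
  fixes u :: "nat \<Rightarrow> real"
  assumes "1 \<le> m" "\<theta> \<le> 1" "decseq u" "u \<longlonglongrightarrow> 0" "0 < u (m - 1)"
    and step: "\<And>n. (1 - \<theta>) * (u n - u (n + m)) \<le> u (n + (m - 1)) - u (n + m)"
  shows "real m * (1 - \<theta>) \<le> 1"
proof -
  \<comment> \<open>the step inequality summed over \<open>n < N\<close>: both sides telescope\<close>
  have partial: "(1 - \<theta>) * (\<Sum>i<m. u i - u (N + i)) \<le> u (m - 1) - u (N + (m - 1))" for N
  proof (induction N)
    case (Suc N)
    have "(\<Sum>i<m. u i - u (Suc N + i)) = (\<Sum>i<m. (u i - u (N + i)) + (u (N + i) - u (N + Suc i)))"
      by simp
    also have "\<dots> = (\<Sum>i<m. u i - u (N + i)) + (u N - u (N + m))"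
      using sum_lessThan_telescope'[of "\<lambda>i. u (N + i)" m] by (subst sum.distrib) simp
    finally have "(1 - \<theta>) * (\<Sum>i<m. u i - u (Suc N + i))
        = (1 - \<theta>) * (\<Sum>i<m. u i - u (N + i)) + (1 - \<theta>) * (u N - u (N + m))"
      by (simp add: distrib_left)
    also have "\<dots> \<le> u (m - 1) - u (Suc N + (m - 1))"
      using Suc.IH step[of N] assms(1) by simp
    finally show ?case .
  qed simp
  have shifted: "(\<lambda>N. u (N + k)) \<longlonglongrightarrow> 0" for k
    using assms(4) by (rule LIMSEQ_ignore_initial_segment)
  have "(\<lambda>N. (1 - \<theta>) * (\<Sum>i<m. u i - u (N + i))) \<longlonglongrightarrow> (1 - \<theta>) * (\<Sum>i<m. u i - 0)"
    "(\<lambda>N. u (m - 1) - u (N + (m - 1))) \<longlonglongrightarrow> u (m - 1) - 0"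
    by (intro tendsto_intros shifted)+
  then have "(1 - \<theta>) * (\<Sum>i<m. u i) \<le> u (m - 1)"
    using partial by (intro tendsto_le[OF sequentially_bot]) auto
  moreover have "(\<Sum>i<m. u (m - 1)) \<le> (\<Sum>i<m. u i)"
    by (rule sum_mono) (use decseqD[OF assms(3)] in auto)
  then have "(1 - \<theta>) * (real m * u (m - 1)) \<le> (1 - \<theta>) * (\<Sum>i<m. u i)"
    using assms(2) by (intro mult_left_mono) simp_all
  ultimately have "(real m * (1 - \<theta>)) * u (m - 1) \<le> 1 * u (m - 1)"
    by (simp add: mult_ac)
  then show ?thesis using assms(5) by (rule mult_right_le_imp_le)
qed

lemma exp_neg_one_lag_parameters:
  fixes q :: real
  assumes "q < exp (-1)"
  obtains \<theta> m where "0 < \<theta>" "\<theta> < 1" "1 \<le> m" "q < \<theta> ^ m" "1 < real m * (1 - \<theta>)"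
proof -
  have "((\<lambda>\<beta>::real. exp (- \<beta>)) \<longlongrightarrow> exp (-1)) (at_right 1)"
  proof -
    have "isCont (\<lambda>\<beta>::real. exp (- \<beta>)) 1" by (intro continuous_intros)
    then show ?thesis by (simp add: isCont_def filterlim_at_split)
  qed
  then have "eventually (\<lambda>\<beta>. 1 < \<beta> \<and> q < exp (- \<beta>)) (at_right 1)"
    using order_tendstoD(1)[OF _ assms] eventually_at_right_less eventually_conj by blast
  then obtain \<beta> where \<beta>: "1 < \<beta>" "q < exp (- \<beta>)"
    using eventually_happens'[OF trivial_limit_at_right_real] by blast
  \<comment> \<open>\<open>(1 - \<beta> / n) ^ n \<longlongrightarrow> exp (- \<beta>)\<close>: this is where the constant \<open>1 / e\<close> comes from\<close>
  have "eventually (\<lambda>n. q < (1 + (- \<beta>) / real n) ^ n) sequentially"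
    using order_tendstoD(1)[OF tendsto_exp_limit_sequentially \<beta>(2)] .
  moreover have "eventually (\<lambda>n. \<beta> < real n) sequentially"
    using filterlim_real_sequentially by (simp add: filterlim_at_top_dense)
  ultimately obtain m where m: "q < (1 + (- \<beta>) / real m) ^ m" "\<beta> < real m"
    using eventually_happens'[OF sequentially_bot] eventually_conj by blast
  show thesis
  proof (rule that[of "1 - \<beta> / real m" m])
    show "0 < 1 - \<beta> / real m" "1 - \<beta> / real m < 1" "1 \<le> m"
      using \<beta> m(2) by auto
    show "q < (1 - \<beta> / real m) ^ m" using m(1) by simp
    show "1 < real m * (1 - (1 - \<beta> / real m))" using \<beta> m(2) by simp
  qed
qed

lemma filterlim_at_right_if_eventually_less:
  fixes y :: "nat \<Rightarrow> real"
  assumes "\<And>k. a < y k" "\<And>z. a < z \<Longrightarrow> eventually (\<lambda>k. y k < z) sequentially"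
  shows "filterlim y (at_right a) sequentially"
proof -
  have "y \<longlonglongrightarrow> a"
  proof (rule order_tendstoI)
    show "eventually (\<lambda>k. z < y k) sequentially" if "z < a" for z
      using assms(1) that by (intro always_eventually) (auto intro: less_trans)
  qed (rule assms(2))
  moreover have "eventually (\<lambda>k. y k \<in> {a<..} \<and> y k \<noteq> a) sequentially"
    using assms(1) by (intro always_eventually) (auto simp: order.strict_iff_not)
  ultimately show ?thesis
    by (simp add: filterlim_at)
qed

lemma geometric_level_sequence:
  fixes H :: "real \<Rightarrow> real"
  assumes "a < T" "continuous_on {a..T} H" "H a = 0" "mono_on {a..T} H"
    and pos: "\<And>t. a < t \<Longrightarrow> t \<le> T \<Longrightarrow> 0 < H t" and "0 < \<theta>" "\<theta> < 1"
  obtains y where "\<And>k. a < y k \<and> y k \<le> T \<and> H (y k) = \<theta> ^ k * H T"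
    "\<And>k. y (Suc k) < y k" "filterlim y (at_right a) sequentially"
proof -
  have HT: "0 < H T" using pos assms(1) by simp
  have "\<exists>y. a \<le> y \<and> y \<le> T \<and> H y = \<theta> ^ k * H T" for k
  proof (rule IVT')
    show "H a \<le> \<theta> ^ k * H T" "\<theta> ^ k * H T \<le> H T"
      using assms(3,6,7) HT by (simp_all add: power_le_one mult_le_cancel_right1)
  qed (use assms(1,2) in auto)
  then obtain y where y: "\<And>k. a \<le> y k \<and> y k \<le> T \<and> H (y k) = \<theta> ^ k * H T"
    by metis
  have Hy: "0 < H (y k)" "H (y (Suc k)) < H (y k)" for k
    using y[of k] y[of "Suc k"] HT assms(6,7) by simp_all
  have ya: "a < y k" for k
    using Hy(1)[of k] y[of k] assms(3) by (cases "y k = a") auto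
  have below: "y k < z" if "a < z" "z \<le> T" "H (y k) < H z" for k z
    using mono_on_strict_invE[OF assms(4), of "y k" z] that y[of k] by auto
  show thesis
  proof (rule that)
    show "a < y k \<and> y k \<le> T \<and> H (y k) = \<theta> ^ k * H T" for k using y ya by auto
    show "y (Suc k) < y k" for k using below[of "y k" "Suc k"] ya Hy y by auto
    show "filterlim y (at_right a) sequentially"
    proof (rule filterlim_at_right_if_eventually_less)
      show "eventually (\<lambda>k. y k < z) sequentially" if "a < z" for z
      proof (cases "z \<le> T")
        case True
        have "(\<lambda>k. \<theta> ^ k * H T) \<longlonglongrightarrow> 0 * H T"
          using assms(6,7) by (intro tendsto_intros) simp
        then have "eventually (\<lambda>k. \<theta> ^ k * H T < H z) sequentially"
          using pos[OF that True] by (intro order_tendstoD(2)) simp_all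
        then show ?thesis
          by eventually_elim (use below that True y in auto)
      next
        case False
        then show ?thesis
          using y by (intro always_eventually) (auto simp: not_le intro: le_less_trans)
      qed
    qed (rule ya)
  qed
qed

lemma window_decay_along_levels:
  fixes H w mu :: "real \<Rightarrow> real" and y :: "nat \<Rightarrow> real"
  assumes "mono_on {a..T} H" "\<And>t. a < t \<Longrightarrow> t \<le> T \<Longrightarrow> 0 < H t"
    and mu: "\<And>x. a < x \<Longrightarrow> x \<le> T \<Longrightarrow> a < mu x \<and> mu x \<le> x \<and> H (mu x) < q * H x"
    and decay: "\<And>x s t. a < x \<Longrightarrow> x \<le> T \<Longrightarrow> mu x \<le> s \<Longrightarrow> s \<le> t \<Longrightarrow> t \<le> x \<Longrightarrow>
      H t * (w x - w t) \<le> H s * (w x - w s)"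
    and y: "\<And>k. a < y k \<and> y k \<le> T \<and> H (y k) = \<theta> ^ k * H T" and "decseq y"
    and "1 \<le> m" "q < \<theta> ^ m"
  shows "(1 - \<theta>) * (w (y n) - w (y (n + m))) \<le> w (y (n + (m - 1))) - w (y (n + m))"
proof -
  define x t s where "x = y n" and "t = y (n + (m - 1))" and "s = y (n + m)"
  have "s \<le> t" "t \<le> x" "a < x" "x \<le> T"
    using decseqD[OF assms(6)] y assms(7) by (auto simp: x_def t_def s_def)
  have "0 < H t" unfolding t_def using y by (intro assms(2)) auto
  have Hs: "H s = \<theta> * H t" "H s = \<theta> ^ m * H x"
    using y assms(7) by (auto simp: x_def t_def s_def power_add mult_ac simp flip: power_Suc)
  have "q * H x < \<theta> ^ m * H x"
    using assms(8) assms(2)[OF \<open>a < x\<close> \<open>x \<le> T\<close>] by simp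
  then have "H (mu x) < H s"
    using mu[OF \<open>a < x\<close> \<open>x \<le> T\<close>] Hs(2) by simp
  then have "mu x < s"
    using mono_on_strict_invE[OF assms(1), of "mu x" s] y[of "n + m"] mu[OF \<open>a < x\<close> \<open>x \<le> T\<close>]
      \<open>x \<le> T\<close> by (auto simp: s_def less_imp_le)
  then have "H t * (w x - w t) \<le> H t * (\<theta> * (w x - w s))"
    using decay[OF \<open>a < x\<close> \<open>x \<le> T\<close> _ \<open>s \<le> t\<close> \<open>t \<le> x\<close>] Hs(1) by (simp add: mult_ac)
  then have "w x - w t \<le> \<theta> * (w x - w s)"
    using \<open>0 < H t\<close> by simp
  then show ?thesis by (simp add: x_def t_def s_def algebra_simps)
qed

lemma exp_neg_one_le_of_window_decay:
  fixes H w mu :: "real \<Rightarrow> real"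
  assumes "a < T" "continuous_on {a..T} H" "H a = 0" "mono_on {a..T} H"
    and pos: "\<And>t. a < t \<Longrightarrow> t \<le> T \<Longrightarrow> 0 < H t"
    and incr: "strict_mono_on {a<..T} w" and lim: "(w \<longlongrightarrow> 0) (at_right a)"
    and mu: "\<And>x. a < x \<Longrightarrow> x \<le> T \<Longrightarrow> a < mu x \<and> mu x \<le> x \<and> H (mu x) < q * H x"
    and decay: "\<And>x s t. a < x \<Longrightarrow> x \<le> T \<Longrightarrow> mu x \<le> s \<Longrightarrow> s \<le> t \<Longrightarrow> t \<le> x \<Longrightarrow>
      H t * (w x - w t) \<le> H s * (w x - w s)"
  shows "exp (-1) \<le> q"
proof (rule ccontr)
  assume "\<not> exp (-1) \<le> q"
  then obtain \<theta> m where \<theta>: "0 < \<theta>" "\<theta> < 1" "1 \<le> m" "q < \<theta> ^ m" "1 < real m * (1 - \<theta>)"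
    using exp_neg_one_lag_parameters by (metis not_le)
  obtain y where y: "\<And>k. a < y k \<and> y k \<le> T \<and> H (y k) = \<theta> ^ k * H T"
    and y_dec: "\<And>k. y (Suc k) < y k" and y_lim: "filterlim y (at_right a) sequentially"
    using geometric_level_sequence[OF assms(1-5) \<theta>(1,2)] by blast
  have "decseq y" using y_dec by (simp add: decseq_SucI less_imp_le)
  define u where "u k = w (y k)" for k
  have u_dec: "u (Suc k) < u k" for k
    unfolding u_def using monotone_onD[OF incr] y y_dec by auto
  then have "decseq u" by (simp add: decseq_SucI less_imp_le)
  moreover have "u \<longlonglongrightarrow> 0"
    unfolding u_def using filterlim_compose[OF lim y_lim] by simp
  moreover have "0 < u (m - 1)"
    using decseq_ge[OF \<open>decseq u\<close> \<open>u \<longlonglongrightarrow> 0\<close>, of m] u_dec[of "m - 1"] \<theta>(3) by simp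
  moreover have "(1 - \<theta>) * (u n - u (n + m)) \<le> u (n + (m - 1)) - u (n + m)" for n
    unfolding u_def
    using window_decay_along_levels[OF assms(4,5) mu decay y \<open>decseq y\<close> \<theta>(3,4)] .
  ultimately have "real m * (1 - \<theta>) \<le> 1"
    using lagged_decay_rate_le_one[OF \<theta>(3)] \<theta>(2) by simp
  then show False using \<theta>(5) by simp
qed

lemma exp_neg_one_le_of_increasing_inj_windows:
  fixes H w mu :: "real \<Rightarrow> real"
  assumes "a < T" "continuous_on {a..T} H" "H a = 0" "mono_on {a..T} H"
    and pos: "\<And>t. a < t \<Longrightarrow> t \<le> T \<Longrightarrow> 0 < H t"
    and incr: "strict_mono_on {a<..T} w" and "(w \<longlongrightarrow> 0) (at_right a)" "continuous_on {a<..T} w"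
    and window: "\<And>x. a < x \<Longrightarrow> x \<le> T \<Longrightarrow> a < mu x \<and> mu x \<le> x \<and> H (mu x) < q * H x \<and>
      inj_on (\<lambda>t. H t * (w x - w t)) {mu x..x}"
  shows "exp (-1) \<le> q"
proof (rule exp_neg_one_le_of_window_decay[OF assms(1-7)])
  show "a < mu x \<and> mu x \<le> x \<and> H (mu x) < q * H x" if "a < x" "x \<le> T" for x
    using window[OF that] by simp
  show "H t * (w x - w t) \<le> H s * (w x - w s)"
    if x: "a < x" "x \<le> T" and "mu x \<le> s" "s \<le> t" "t \<le> x" for x s t
  proof (rule window_decay_if_inj)
    have "continuous_on {a<..T} H"
      using assms(2) by (rule continuous_on_subset) auto
    then show "continuous_on {mu x..x} (\<lambda>t. H t * (w x - w t))"
      using window[OF x] x by (intro continuous_on_window_product[OF _ assms(8)]) auto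
    show "0 < H t' \<and> w t' < w x" if "mu x \<le> t'" "t' < x" for t'
      using pos[of t'] monotone_onD[OF incr, of t' x] window[OF x] that x by auto
  qed (use window[OF x] that in auto)
qed

lemma exp_neg_one_le_of_inj_windows:
  fixes H w mu :: "real \<Rightarrow> real"
  assumes "a < T" "continuous_on {a..T} H" "H a = 0" "mono_on {a..T} H"
    and pos: "\<And>t. a < t \<Longrightarrow> t \<le> T \<Longrightarrow> 0 < H t"
    and "continuous_on {a<..T} w" "(w \<longlongrightarrow> L) (at_right a)"
    and window: "\<And>x. a < x \<Longrightarrow> x \<le> T \<Longrightarrow> a < mu x \<and> mu x \<le> x \<and> H (mu x) < q * H x \<and>
      inj_on (\<lambda>t. H t * (w x - w t)) {mu x..x}"
  shows "exp (-1) \<le> q"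
proof (cases "q < 1")
  case False
  moreover have "exp (-1) < (1::real)" by simp
  ultimately show ?thesis by linarith
next
  case True
  have "{a<..T} \<subseteq> {a..T}" by auto
  then have "continuous_on {a<..T} H" "mono_on {a<..T} H"
    using continuous_on_subset[OF assms(2)] mono_on_subset[OF assms(4)] by blast+
  from inj_windows_strict_mono_or_antimono[OF True this pos assms(6) window]
  show ?thesis
  proof
    assume "strict_mono_on {a<..T} w"
    then have "strict_mono_on {a<..T} (\<lambda>t. w t - L)"
      by (auto simp: monotone_on_def)
    moreover have "((\<lambda>t. w t - L) \<longlongrightarrow> 0) (at_right a)" using assms(7) by (rule LIM_zero)
    ultimately show ?thesis
      using assms(6) window
      by (intro exp_neg_one_le_of_increasing_inj_windows
          [where w = "\<lambda>t. w t - L" and mu = mu, OF assms(1-5)])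
        (auto intro: continuous_intros)
  next
    assume "strict_antimono_on {a<..T} w"
    then have "strict_mono_on {a<..T} (\<lambda>t. L - w t)"
      by (auto simp: monotone_on_def)
    moreover have "((\<lambda>t. L - w t) \<longlongrightarrow> 0) (at_right a)"
      using tendsto_minus[OF LIM_zero[OF assms(7)]] by simp
    moreover have "inj_on (\<lambda>t. H t * ((L - w x) - (L - w t))) {mu x..x}" if "a < x" "x \<le> T" for x
      using window[OF that] by (auto simp: inj_on_def algebra_simps)
    ultimately show ?thesis
      using assms(6) window
      by (intro exp_neg_one_le_of_increasing_inj_windows
          [where w = "\<lambda>t. L - w t" and mu = mu, OF assms(1-5)])
        (auto intro: continuous_intros)
  qed
qed

lemma mono_on_not_locally_constant_gt:
  fixes h :: "real \<Rightarrow> real"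
  assumes "mono_on {a..<b} h" "\<forall>\<epsilon>>0. \<not> (\<exists>c. \<forall>t\<in>{a..<b}. t < a + \<epsilon> \<longrightarrow> h t = c)"
    and "a < t" "t < b"
  shows "h a < h t"
proof (rule ccontr)
  assume "\<not> h a < h t"
  have "h y = h a" if "y \<in> {a..<b}" "y < a + (t - a)" for y
    using mono_onD[OF assms(1), of a y] mono_onD[OF assms(1), of y t] that assms(3,4)
      \<open>\<not> h a < h t\<close> by auto
  then show False using assms(2,3) by (meson diff_gt_0_iff_gt)
qed

lemma Limsup_at_right_less_ereal:
  fixes f :: "real \<Rightarrow> real"
  assumes "Limsup (at_right a) (\<lambda>x. ereal (f x)) < ereal C" "a < b"
  obtains q c where "q < C" "a < c" "c < b" "\<And>x. a < x \<Longrightarrow> x \<le> c \<Longrightarrow> f x < q"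
proof -
  obtain q where q: "Limsup (at_right a) (\<lambda>x. ereal (f x)) < ereal q" "q < C"
    using ereal_dense2[OF assms(1)] by auto
  have "eventually (\<lambda>x. f x < q) (at_right a)"
    using Limsup_lessD[OF q(1)] by simp
  then obtain b' where "a < b'" "\<And>x. a < x \<Longrightarrow> x < b' \<Longrightarrow> f x < q"
    unfolding eventually_at_right_field by blast
  then show thesis
    using that[OF q(2), of "(a + min b b') / 2"] assms(2) by auto
qed

lemma mu_window_inj:
  fixes h g :: "real \<Rightarrow> real"
  assumes "a < x" "x < b" "continuous_on {a..<b} h" "continuous_on {a..<b} g"
    and pos: "\<And>t. a < t \<Longrightarrow> t < b \<Longrightarrow> h a < h t"
  defines "r \<equiv> \<lambda>t. (g t - g a) / (h t - h a)"
  shows "a < mu a b h g x" "mu a b h g x \<le> x"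
    "inj_on (\<lambda>t. (h t - h a) * (r x - r t)) {mu a b h g x..x}"
proof -
  define E where "E = (\<lambda>t. (g x - g a) * h t - (h x - h a) * g t)"
  have "continuous_on {a..<b} E"
    unfolding E_def using assms(3,4) by (intro continuous_intros)
  moreover have "E a = E x" by (simp add: E_def algebra_simps)
  moreover have "mu a b h g x = Sup {\<tau> \<in> {a<..x}. local_extremum_on {a..<b} E \<tau>}"
    by (simp add: mu_def E_def)
  ultimately have window: "a < mu a b h g x" "mu a b h g x \<le> x" "inj_on E {mu a b h g x..x}"
    using Sup_local_extrema_window[OF assms(1,2)] by simp_all
  then show "a < mu a b h g x" "mu a b h g x \<le> x" by simp_all
  have cross: "A * D - B * C = B * (D * (A / B - C / D))" if "B \<noteq> 0" "D \<noteq> 0" for A B C D :: real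
    using that by (simp add: field_simps)
  have "E t = E a + (h x - h a) * ((h t - h a) * (r x - r t))" if "a < t" "t < b" for t
  proof -
    have "E t - E a = (g x - g a) * (h t - h a) - (h x - h a) * (g t - g a)"
      by (simp add: E_def algebra_simps)
    then show ?thesis
      using cross pos[OF that] pos[OF assms(1,2)] by (simp add: r_def)
  qed
  then show "inj_on (\<lambda>t. (h t - h a) * (r x - r t)) {mu a b h g x..x}"
    using window assms(2) by (auto simp: inj_on_def)
qed

theorem theorem3:
  fixes a b :: real and h g :: "real \<Rightarrow> real" and L :: real
  assumes "a < b"
    and "continuous_on {a..<b} h" and "continuous_on {a..<b} g"
    and "mono_on {a..<b} h"
    and "\<forall>\<epsilon>>0. \<not> (\<exists>c. \<forall>t\<in>{a..<b}. t < a + \<epsilon> \<longrightarrow> h t = c)"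
    and "((\<lambda>x. (g x - g a) / (h x - h a)) \<longlongrightarrow> L) (at_right a)"
  shows "Limsup (at_right a) (\<lambda>x. ereal ((h (mu a b h g x) - h a) / (h x - h a)))
           \<ge> ereal (1 / exp 1)"
proof (rule ccontr)
  define H where "H t = h t - h a" for t
  define r where "r t = (g t - g a) / (h t - h a)" for t
  define m where "m x = mu a b h g x" for x
  have h_gt: "h a < h t" if "a < t" "t < b" for t
    using mono_on_not_locally_constant_gt[OF assms(4,5) that] .
  assume "\<not> ?thesis"
  then have "Limsup (at_right a) (\<lambda>x. ereal (H (m x) / H x)) < ereal (exp (-1))"
    by (simp add: H_def m_def exp_minus inverse_eq_divide not_le)
  from Limsup_at_right_less_ereal[OF this assms(1)]
  obtain q c0 where q: "q < exp (-1)" and c0: "a < c0" "c0 < b"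
    and ratio: "\<And>x. a < x \<Longrightarrow> x \<le> c0 \<Longrightarrow> H (m x) / H x < q"
    by blast
  have "exp (-1) \<le> q"
  proof (rule exp_neg_one_le_of_inj_windows[OF c0(1)])
    show "continuous_on {a..c0} H" "continuous_on {a<..c0} r"
      unfolding H_def r_def using c0 h_gt
      by (auto intro!: continuous_intros
          intro: continuous_on_subset[OF assms(2)] continuous_on_subset[OF assms(3)])
        (metis less_irrefl order.strict_trans1)
    show "H a = 0" by (simp add: H_def)
    show "mono_on {a..c0} H" using mono_onD[OF assms(4)] c0 by (auto simp: H_def intro!: mono_onI)
    show "0 < H t" if "a < t" "t \<le> c0" for t using h_gt that c0 by (simp add: H_def)
    show "(r \<longlongrightarrow> L) (at_right a)" using assms(6) by (simp add: r_def[abs_def])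
    show "a < m x \<and> m x \<le> x \<and> H (m x) < q * H x \<and> inj_on (\<lambda>t. H t * (r x - r t)) {m x..x}"
      if "a < x" "x \<le> c0" for x
      using mu_window_inj[OF that(1) _ assms(2,3) h_gt] ratio[OF that] h_gt[of x] that c0
      by (auto simp: m_def H_def r_def divide_less_eq)
  qed
  then show False using q by simp
qed

end
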